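(* Let $R$ be a principal ideal domain with field of fractions $F$, and let $Q\subseteq P$ be additive subgroups of $F$ containing $R$. If $P$ is an $R$-module and $\{p^mq\mid p\in P,\ q\in Q\}\subseteq Q$ for some positive integer $m$, then $P=Q$. Consequently, for every admissible pair $(\Lambda_l,\Lambda_s)=(Q,P)$ (of any type $\Phi\in\{B_l,C_l,F_4,G_2\}$) in $F$ with $R\subseteq Q$, one has $P=Q$ and $P$ is a subring of $F$.
   Context: Let $p=2$ for $\Phi=B_l,C_l,F_4$ and $p=3$ for $\Phi=G_2$. An admissible pair of type $\Phi$ in a ring $R$ is a pair $\Lambda=(\Lambda_l,\Lambda_s)$ of additive subgroups of $R$ with: (AP1) $p\Lambda_s\subseteq\Lambda_l\subseteq\Lambda_s$; (AP2) $t^p\Lambda_l\subseteq\Lambda_l$ for all $t\in\Lambda_s$; (AP3) $\Lambda_s$ is a subring if $\Phi\ne B_l$; (AP4) $\Lambda_l$ is a subring if $\Phi\ne C_l$; and moreover $\Lambda_l\Lambda_s\subseteq\Lambda_s$ (for $B_2=C_2$ neither need be a subring). *)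

theory Defs
  imports "HOL-Computational_Algebra.Fraction_Field"
begin

definition ideal_of :: "'a::comm_ring_1 set \<Rightarrow> bool" where
  "ideal_of I \<longleftrightarrow> 0 \<in> I \<and> (\<forall>x\<in>I. \<forall>y\<in>I. x + y \<in> I) \<and> (\<forall>x\<in>I. - x \<in> I)
      \<and> (\<forall>x\<in>I. \<forall>r. r * x \<in> I)"

definition is_PID :: "'a::idom itself \<Rightarrow> bool" where
  "is_PID _ \<longleftrightarrow> (\<forall>I::'a set. ideal_of I \<longrightarrow> (\<exists>a. I = {a * r | r. True}))"

definition emb :: "'a::idom \<Rightarrow> 'a fract" where
  "emb r = Fract r 1"

definition add_subgroup :: "'b::ab_group_add set \<Rightarrow> bool" where
  "add_subgroup A \<longleftrightarrow> 0 \<in> A \<and> (\<forall>x\<in>A. \<forall>y\<in>A. x + y \<in> A) \<and> (\<forall>x\<in>A. - x \<in> A)"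

definition subring_of :: "'b::ring set \<Rightarrow> bool" where
  "subring_of A \<longleftrightarrow> add_subgroup A \<and> (\<forall>x\<in>A. \<forall>y\<in>A. x * y \<in> A)"

(* doubly laced root system types; B l and C l for l >= 2; B 2 = C 2 *)
datatype root_type = TB nat | TC nat | TF4 | TG2

definition valid_type :: "root_type \<Rightarrow> bool" where
  "valid_type \<Phi> \<longleftrightarrow> (\<forall>l. \<Phi> = TB l \<longrightarrow> l \<ge> 2) \<and> (\<forall>l. \<Phi> = TC l \<longrightarrow> l \<ge> 2)"

definition is_typeB :: "root_type \<Rightarrow> bool" where
  "is_typeB \<Phi> \<longleftrightarrow> (\<exists>l. \<Phi> = TB l) \<or> \<Phi> = TC 2"

definition is_typeC :: "root_type \<Rightarrow> bool" where
  "is_typeC \<Phi> \<longleftrightarrow> (\<exists>l. \<Phi> = TC l) \<or> \<Phi> = TB 2"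

definition char_p :: "root_type \<Rightarrow> nat" where
  "char_p \<Phi> = (if \<Phi> = TG2 then 3 else 2)"

definition admissible_pair :: "root_type \<Rightarrow> 'b::comm_ring_1 set \<Rightarrow> 'b set \<Rightarrow> bool" where
  "admissible_pair \<Phi> Ll Ls \<longleftrightarrow>
     add_subgroup Ll \<and> add_subgroup Ls \<and>
     (\<forall>x\<in>Ls. of_nat (char_p \<Phi>) * x \<in> Ll) \<and> Ll \<subseteq> Ls \<and>
     (\<forall>t\<in>Ls. \<forall>x\<in>Ll. t ^ char_p \<Phi> * x \<in> Ll) \<and>
     (\<not> is_typeB \<Phi> \<longrightarrow> subring_of Ls) \<and>
     (\<not> is_typeC \<Phi> \<longrightarrow> subring_of Ll) \<and>
     (\<forall>x\<in>Ll. \<forall>y\<in>Ls. x * y \<in> Ls)"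

end

theory Submission
  imports Defs
begin

text \<open>Over a PID every fraction can be written as a/b with a x + b y = 1. If p = a/b lies in the
  R-module P, then 1/b = x p + y lies in P as well, and p = (1/b)^m \<cdot> a b^(m-1) is then a product
  of an m-th power of an element of P with an element of R \<subseteq> Q, hence lies in Q.\<close>

lemma Fract_power: "Fract (a::'a::idom) b ^ n = Fract (a ^ n) (b ^ n)"
  by (induction n) (simp_all add: One_fract_def)

lemma ideal_of_linear_combinations: "ideal_of {x * a + y * b | x y. True}"
  unfolding ideal_of_def
proof (intro conjI ballI allI)
  show "0 \<in> {x * a + y * b | x y. True}"
    by (intro CollectI exI[of _ 0]) simp
next
  fix u v assume "u \<in> {x * a + y * b | x y. True}" "v \<in> {x * a + y * b | x y. True}"
  then obtain x1 y1 x2 y2 where "u = x1 * a + y1 * b" "v = x2 * a + y2 * b" by blast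
  then show "u + v \<in> {x * a + y * b | x y. True}"
    by (intro CollectI exI[of _ "x1 + x2"] exI[of _ "y1 + y2"]) (simp add: algebra_simps)
next
  fix u assume "u \<in> {x * a + y * b | x y. True}"
  then obtain x1 y1 where "u = x1 * a + y1 * b" by blast
  then show "- u \<in> {x * a + y * b | x y. True}"
    by (intro CollectI exI[of _ "- x1"] exI[of _ "- y1"]) (simp add: algebra_simps)
next
  fix u r assume "u \<in> {x * a + y * b | x y. True}"
  then obtain x1 y1 where "u = x1 * a + y1 * b" by blast
  then show "r * u \<in> {x * a + y * b | x y. True}"
    by (intro CollectI exI[of _ "r * x1"] exI[of _ "r * y1"]) (simp add: algebra_simps)
qed

lemma PID_fract_coprime_representation:
  fixes R :: "'a::idom itself" and p :: "'a fract"
  assumes "is_PID R"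
  obtains a b x y where "p = Fract a b" "b \<noteq> 0" "x * a + y * b = 1"
proof -
  obtain a b where p: "p = Fract a b" and "(b::'a) \<noteq> 0" by (cases p) auto
  from assms obtain d where I: "{x * a + y * b | x y. True} = {d * r | r. True}"
    using ideal_of_linear_combinations unfolding is_PID_def by blast
  have "a \<in> {d * r | r. True}" "b \<in> {d * r | r. True}"
    unfolding I[symmetric] by (auto intro: exI[of _ 0] exI[of _ 1])
  then obtain a' b' where a: "a = d * a'" and b: "b = d * b'" by blast
  have "d \<in> {x * a + y * b | x y. True}" unfolding I by (auto intro: exI[of _ 1])
  then obtain x y where "d = x * a + y * b" by blast
  then have "d * (x * a' + y * b') = d * 1" by (simp add: a b algebra_simps)
  moreover have "d \<noteq> 0" using \<open>b \<noteq> 0\<close> b by auto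
  ultimately have "x * a' + y * b' = 1" by simp
  moreover have "p = Fract a' b'" and "b' \<noteq> 0"
    using \<open>b \<noteq> 0\<close> by (auto simp: p a b eq_fract)
  ultimately show thesis using that by blast
qed

lemma PID_module_subset_of_power_closed:
  fixes R :: "'a::idom itself" and P Q :: "'a fract set"
  assumes "is_PID R"
    and add_closed: "\<forall>u\<in>P. \<forall>v\<in>P. u + v \<in> P"
    and module: "\<forall>r. \<forall>p\<in>P. emb r * p \<in> P"
    and "range emb \<subseteq> P" "range emb \<subseteq> Q"
    and "m > 0" and power_closed: "\<forall>p\<in>P. \<forall>q\<in>Q. p ^ m * q \<in> Q"
  shows "P \<subseteq> Q"
proof
  fix p assume "p \<in> P"
  obtain a b x y where p: "p = Fract a b" and "b \<noteq> 0" and bezout: "x * a + y * b = 1"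
    using PID_fract_coprime_representation[OF \<open>is_PID R\<close>] .
  have "emb x * p + emb y = Fract (x * a + y * b) b"
    using \<open>b \<noteq> 0\<close> by (simp add: p emb_def algebra_simps)
  also have "\<dots> = Fract 1 b" by (simp only: bezout)
  finally have "emb x * p + emb y = Fract 1 b" .
  moreover have "emb x * p \<in> P" "emb y \<in> P" using module \<open>p \<in> P\<close> \<open>range emb \<subseteq> P\<close> by auto
  ultimately have "Fract 1 b \<in> P" using add_closed by metis
  moreover have "emb (a * b ^ (m - 1)) \<in> Q" using \<open>range emb \<subseteq> Q\<close> by blast
  ultimately have "Fract 1 b ^ m * emb (a * b ^ (m - 1)) \<in> Q" using power_closed by blast
  moreover have "b ^ m = b * b ^ (m - 1)" using \<open>m > 0\<close> by (cases m) auto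
  then have "Fract 1 b ^ m * emb (a * b ^ (m - 1)) = p"
    using \<open>b \<noteq> 0\<close> by (simp add: Fract_power emb_def p eq_fract algebra_simps)
  ultimately show "p \<in> Q" by simp
qed

lemma admissible_pair_equal_of_PID:
  fixes R :: "'a::idom itself" and Q P :: "'a fract set"
  assumes "is_PID R" and adm: "admissible_pair \<Phi> Q P" and "range emb \<subseteq> Q"
  shows "P = Q"
proof
  have "\<forall>r. \<forall>p\<in>P. emb r * p \<in> P"
    using adm \<open>range emb \<subseteq> Q\<close> unfolding admissible_pair_def by blast
  moreover have "char_p \<Phi> > 0" by (simp add: char_p_def)
  ultimately show "P \<subseteq> Q"
    using PID_module_subset_of_power_closed[OF \<open>is_PID R\<close>, of P Q "char_p \<Phi>"] adm
      \<open>range emb \<subseteq> Q\<close> by (auto simp: admissible_pair_def add_subgroup_def)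
  show "Q \<subseteq> P" using adm by (simp add: admissible_pair_def)
qed

theorem proposition7p3:
  fixes R :: "'a::idom itself"
  assumes "is_PID R"
  shows "(\<forall>Q P :: 'a fract set.
            add_subgroup Q \<and> add_subgroup P \<and> Q \<subseteq> P \<and> range emb \<subseteq> Q \<and>
            (\<forall>r. \<forall>p\<in>P. emb r * p \<in> P) \<and>
            (\<exists>m::nat. m > 0 \<and> (\<forall>p\<in>P. \<forall>q\<in>Q. p ^ m * q \<in> Q))
          \<longrightarrow> P = Q)
       \<and> (\<forall>\<Phi> (Q :: 'a fract set) P.
            valid_type \<Phi> \<and> admissible_pair \<Phi> Q P \<and> range emb \<subseteq> Q
          \<longrightarrow> P = Q \<and> subring_of P)"
proof (intro conjI allI impI; elim conjE exE)
  fix Q P :: "'a fract set" and m :: nat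
  assume "add_subgroup P" "Q \<subseteq> P" "range emb \<subseteq> Q" "\<forall>r. \<forall>p\<in>P. emb r * p \<in> P" "m > 0"
    "\<forall>p\<in>P. \<forall>q\<in>Q. p ^ m * q \<in> Q"
  with PID_module_subset_of_power_closed[OF assms, of P Q m] show "P = Q"
    by (auto simp: add_subgroup_def)
next
  fix \<Phi> and Q P :: "'a fract set"
  assume adm: "admissible_pair \<Phi> Q P" and "range emb \<subseteq> Q"
  then show "P = Q" by (rule admissible_pair_equal_of_PID[OF assms])
  then show "subring_of P"
    using adm by (auto simp: admissible_pair_def subring_of_def)
qed

end
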